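(* Let $b\ge3$, $1\le j\le b-1$, $\ell\in\{2,\dots,b\}$. For $i=1,\dots,\ell$ let $I_i=[a_i,b_i]\subseteq[0,1]$ and $J_i=[c_i,d_i]\subseteq[0,1]$ be nonempty intervals, and fix numbers $\bar p_{\ell+1},\dots,\bar p_b,\bar q_{\ell+1},\dots,\bar q_b$. Let $D$ be the set of pairs $(p,q)$ of probability vectors in $\mathbb R^b$ with $p_i\in I_i$, $q_i\in J_i$ for $i\le\ell$ and $p_i=\bar p_i$, $q_i=\bar q_i$ for $i>\ell$. If $(\bar p;\bar q)\in D$ is a maximum point of $\Psi_j$ on $D$, then either $\bar p_i=\bar p_h$ and $\bar q_i=\bar q_h$ for all $i,h\in\{1,\dots,\ell\}$, or the maximum of $\Psi_j$ on $D$ is also attained at some point $(p';q')\in D$ for which there is an index $i\in\{1,\dots,\ell\}$ with $p'_i\in\{a_i,b_i\}$ or $q'_i\in\{c_i,d_i\}$.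
   Context: For an integer $1\le j\le b-1$ and vectors $p,q\in\mathbb R^b$, $$\Psi_j(p;q)=\frac{1}{(b-j-1)!}\sum_{\sigma\in S_b}\Big(p_{\sigma(1)}\cdots p_{\sigma(j)}\,q_{\sigma(j+1)}+q_{\sigma(1)}\cdots q_{\sigma(j)}\,p_{\sigma(j+1)}\Big),$$ where $S_b$ is the set of permutations of $\{1,\dots,b\}$. *)

theory Defs
  imports Complex_Main "HOL-Combinatorics.Permutations"
begin

text \<open>Vectors in R^b are functions nat => real, coordinates 1..b.\<close>

definition Psi :: "nat \<Rightarrow> nat \<Rightarrow> (nat \<Rightarrow> real) \<Rightarrow> (nat \<Rightarrow> real) \<Rightarrow> real" where
  "Psi b j p q = (1 / fact (b - j - 1)) *
     (\<Sum>\<sigma> \<in> {\<sigma>. \<sigma> permutes {1..b}}.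
        (\<Prod>k=1..j. p (\<sigma> k)) * q (\<sigma> (j+1)) + (\<Prod>k=1..j. q (\<sigma> k)) * p (\<sigma> (j+1)))"

definition prob_vec :: "nat \<Rightarrow> (nat \<Rightarrow> real) \<Rightarrow> bool" where
  "prob_vec b p \<longleftrightarrow> (\<forall>i\<in>{1..b}. 0 \<le> p i) \<and> (\<Sum>i=1..b. p i) = 1"

definition domD :: "nat \<Rightarrow> nat \<Rightarrow> (nat \<Rightarrow> real) \<Rightarrow> (nat \<Rightarrow> real) \<Rightarrow> (nat \<Rightarrow> real) \<Rightarrow> (nat \<Rightarrow> real)
     \<Rightarrow> (nat \<Rightarrow> real) \<Rightarrow> (nat \<Rightarrow> real) \<Rightarrow> ((nat \<Rightarrow> real) \<times> (nat \<Rightarrow> real)) set" where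
  "domD b l a bu c d pbar qbar = {(p, q). prob_vec b p \<and> prob_vec b q \<and>
     (\<forall>i\<in>{1..l}. a i \<le> p i \<and> p i \<le> bu i \<and> c i \<le> q i \<and> q i \<le> d i) \<and>
     (\<forall>i\<in>{l<..b}. p i = pbar i \<and> q i = qbar i)}"

end

theory Submission
  imports Defs "HOL-Computational_Algebra.Polynomial"
begin

text \<open>Pick coordinates \<open>i \<noteq> h\<close> at which the maximum point differs and move mass between
  them along a segment that passes through the maximum point at \<open>s = 1\<close> and through its
  image under the transposition of \<open>i\<close> and \<open>h\<close> at \<open>s = -1\<close>. Along this segment \<open>Psi\<close> is a
  polynomial of degree at most \<open>3\<close> which is even in \<open>s\<close> by the permutation symmetry of
  \<open>Psi\<close>, hence of the form \<open>c0 + c2 s\<^sup>2\<close>. If \<open>s = 1\<close> is interior to the feasible part of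
  the segment, moving past \<open>1\<close> rules out \<open>c2 > 0\<close> and moving towards \<open>0\<close> rules out
  \<open>c2 < 0\<close>; so \<open>Psi\<close> is constant there and the end of the feasible part, which lies on a
  face of the box, is again a maximum point.\<close>

lemma Psi_comp_permutes:
  assumes "t permutes {1..b}"
  shows "Psi b j (p \<circ> t) (q \<circ> t) = Psi b j p q"
  unfolding Psi_def
  by (subst (2) setum_permutations_compose_left[OF assms]) (simp add: o_def)

lemma degree_prod_reindex_le:
  fixes R :: "'a \<Rightarrow> 'b::comm_semiring_1 poly"
  assumes "inj_on \<sigma> A" "\<sigma> ` A \<subseteq> B" "finite B"
  shows "degree (\<Prod>k\<in>A. R (\<sigma> k)) \<le> (\<Sum>m\<in>B. degree (R m))"
proof -
  have "finite A" using assms finite_imageD finite_subset by blast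
  then have "degree (\<Prod>k\<in>A. R (\<sigma> k)) \<le> (\<Sum>k\<in>A. degree (R (\<sigma> k)))"
    using degree_prod_sum_le[of A "\<lambda>k. R (\<sigma> k)"] by (simp add: o_def)
  also have "\<dots> = (\<Sum>m\<in>\<sigma> ` A. degree (R m))"
    using sum.reindex[OF assms(1), of "\<lambda>m. degree (R m)"] by simp
  also have "\<dots> \<le> (\<Sum>m\<in>B. degree (R m))"
    using assms(2,3) by (intro sum_mono2) auto
  finally show ?thesis .
qed

text \<open>A monomial of \<open>Psi\<close> is a product of distinct \<open>p\<close>-coordinates, of degree at most the
  budget \<open>2\<close>, times a single \<open>q\<close>-coordinate of degree at most \<open>1\<close> (or vice versa).\<close>

lemma Psi_polynomial_path:
  fixes p q :: "real \<Rightarrow> nat \<Rightarrow> real" and P Q :: "nat \<Rightarrow> real poly"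
  assumes "j \<le> b"
    and p: "\<And>s k. p s k = poly (P k) s" and q: "\<And>s k. q s k = poly (Q k) s"
    and P1: "\<And>k. degree (P k) \<le> 1" and Q1: "\<And>k. degree (Q k) \<le> 1"
    and P2: "(\<Sum>k\<in>{1..b}. degree (P k)) \<le> 2" and Q2: "(\<Sum>k\<in>{1..b}. degree (Q k)) \<le> 2"
  shows "\<exists>Pol. degree Pol \<le> 3 \<and> (\<forall>s. Psi b j (p s) (q s) = poly Pol s)"
proof -
  let ?T = "\<lambda>\<sigma>. (\<Prod>k=1..j. P (\<sigma> k)) * Q (\<sigma> (j+1)) + (\<Prod>k=1..j. Q (\<sigma> k)) * P (\<sigma> (j+1))"
  define Pol where "Pol = smult (1 / fact (b - j - 1)) (\<Sum>\<sigma> | \<sigma> permutes {1..b}. ?T \<sigma>)"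
  have "Psi b j (p s) (q s) = poly Pol s" for s
    unfolding Pol_def Psi_def by (simp add: poly_sum poly_prod p q)
  moreover have "degree (?T \<sigma>) \<le> 3" if \<sigma>: "\<sigma> permutes {1..b}" for \<sigma>
  proof -
    have inj: "inj_on \<sigma> {1..j}"
      using permutes_inj[OF \<sigma>] by (auto simp: inj_on_def inj_def)
    have "\<sigma> ` {1..j} \<subseteq> \<sigma> ` {1..b}"
      using \<open>j \<le> b\<close> by (intro image_mono) simp
    then have img: "\<sigma> ` {1..j} \<subseteq> {1..b}"
      by (simp only: permutes_image[OF \<sigma>])
    have "degree (\<Prod>k=1..j. P (\<sigma> k)) \<le> 2" "degree (\<Prod>k=1..j. Q (\<sigma> k)) \<le> 2"
      using degree_prod_reindex_le[OF inj img _, of P] degree_prod_reindex_le[OF inj img _, of Q] P2 Q2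
      by simp_all
    then have "degree ((\<Prod>k=1..j. P (\<sigma> k)) * Q (\<sigma> (j+1))) \<le> 3"
      and "degree ((\<Prod>k=1..j. Q (\<sigma> k)) * P (\<sigma> (j+1))) \<le> 3"
      using degree_mult_le[of "\<Prod>k=1..j. P (\<sigma> k)" "Q (\<sigma> (j+1))"] Q1[of "\<sigma> (j+1)"]
        degree_mult_le[of "\<Prod>k=1..j. Q (\<sigma> k)" "P (\<sigma> (j+1))"] P1[of "\<sigma> (j+1)"]
      by linarith+
    then show ?thesis by (rule degree_add_le)
  qed
  then have "degree (\<Sum>\<sigma> | \<sigma> permutes {1..b}. ?T \<sigma>) \<le> 3"
    by (intro degree_sum_le) (auto simp: finite_permutations)
  then have "degree Pol \<le> 3"
    unfolding Pol_def using degree_smult_le order_trans by blast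
  ultimately show ?thesis by blast
qed

lemma poly_even_cubic:
  fixes Pol :: "real poly"
  assumes "degree Pol \<le> 3" and even: "\<And>s. poly Pol (-s) = poly Pol s"
  shows "poly Pol s = coeff Pol 0 + coeff Pol 2 * s\<^sup>2"
proof -
  have cubic: "poly Pol x = coeff Pol 0 + coeff Pol 1 * x + coeff Pol 2 * x\<^sup>2 + coeff Pol 3 * x ^ 3"
    for x
  proof -
    have "poly Pol x = (\<Sum>i\<le>3. coeff Pol i * x ^ i)"
      unfolding poly_altdef
      by (rule sum.mono_neutral_left) (use assms(1) in \<open>auto simp: coeff_eq_0\<close>)
    then show ?thesis by (simp add: numeral_eq_Suc)
  qed
  have "coeff Pol 1 + coeff Pol 3 = 0" "coeff Pol 1 + 4 * coeff Pol 3 = 0"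
    using even[of 1] even[of 2] unfolding cubic by simp_all
  then have "coeff Pol 1 = 0" "coeff Pol 3 = 0" by linarith+
  then show ?thesis using cubic by simp
qed

definition swap_path :: "nat \<Rightarrow> nat \<Rightarrow> (nat \<Rightarrow> real) \<Rightarrow> real \<Rightarrow> nat \<Rightarrow> real" where
  "swap_path i h p s = p(i := (p i + p h) / 2 + s * ((p i - p h) / 2),
                         h := (p i + p h) / 2 - s * ((p i - p h) / 2))"

lemma swap_path_apply:
  assumes "i \<noteq> h"
  shows "swap_path i h p s i = (p i + p h) / 2 + s * ((p i - p h) / 2)"
    and "swap_path i h p s h = (p i + p h) / 2 - s * ((p i - p h) / 2)"
    and "k \<noteq> i \<Longrightarrow> k \<noteq> h \<Longrightarrow> swap_path i h p s k = p k"
  using assms by (auto simp: swap_path_def)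

lemma swap_path_one [simp]: "swap_path i h p 1 = p"
  by (auto simp: swap_path_def field_simps)

lemma swap_path_uminus:
  assumes "i \<noteq> h"
  shows "swap_path i h p (-s) = swap_path i h p s \<circ> transpose i h"
  using assms by (auto simp: swap_path_def transpose_def)

lemma sum_swap_path:
  assumes "finite A" "i \<in> A" "h \<in> A" "i \<noteq> h"
  shows "sum (swap_path i h p s) A = sum p A"
proof -
  have split: "sum f A = f i + (f h + sum f (A - {i} - {h}))" for f :: "nat \<Rightarrow> real"
    using assms by (simp add: sum.remove[of A i] sum.remove[of "A - {i}" h])
  show ?thesis
    unfolding split[of p] split[of "swap_path i h p s"]
    using assms(4) by (simp add: swap_path_apply)
qed

lemma Psi_swap_path_even_quadratic:
  assumes "j \<le> b" "i \<in> {1..b}" "h \<in> {1..b}" "i \<noteq> h"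
  shows "\<exists>c0 c2. \<forall>s. Psi b j (swap_path i h p s) (swap_path i h q s) = c0 + c2 * s\<^sup>2"
proof -
  define P where "P r k = (if k = i then [:(r i + r h) / 2, (r i - r h) / 2:]
    else if k = h then [:(r i + r h) / 2, - (r i - r h) / 2:] else [:r k:])" for r :: "nat \<Rightarrow> real" and k
  have path: "swap_path i h r s k = poly (P r k) s" for r s k
    using assms(4) by (auto simp: P_def swap_path_apply field_simps)
  have deg: "degree (P r k) \<le> of_bool (k = i) + of_bool (k = h)" for r k
    using assms(4) by (auto simp: P_def)
  have "(\<Sum>k\<in>{1..b}. of_bool (k = i) + of_bool (k = h) :: nat) = 2"
    using assms(2,3) by (simp add: sum.distrib)
  then have deg2: "(\<Sum>k\<in>{1..b}. degree (P r k)) \<le> 2" for r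
    by (metis (no_types, lifting) deg sum_mono)
  have deg1: "degree (P r k) \<le> 1" for r k
    using deg[of r k] assms(4) by (cases "k = i"; cases "k = h") auto
  obtain Pol where Pol: "degree Pol \<le> 3"
    "\<And>s. Psi b j (swap_path i h p s) (swap_path i h q s) = poly Pol s"
    using Psi_polynomial_path[OF assms(1) path path deg1 deg1 deg2 deg2] by blast
  have "transpose i h permutes {1..b}"
    using assms(2,3) by (rule permutes_swap_id)
  then have "poly Pol (-s) = poly Pol s" for s
    unfolding Pol(2)[symmetric] swap_path_uminus[OF assms(4)] by (rule Psi_comp_permutes)
  then show ?thesis
    using poly_even_cubic[OF Pol(1)] Pol(2) by metis
qed

definition line_in_box :: "'k set \<Rightarrow> ('k \<Rightarrow> real) \<Rightarrow> ('k \<Rightarrow> real) \<Rightarrow> ('k \<Rightarrow> real) \<Rightarrow> ('k \<Rightarrow> real) \<Rightarrow> real \<Rightarrow> bool" where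
  "line_in_box K lo hi m e s \<longleftrightarrow> (\<forall>k\<in>K. lo k \<le> m k + s * e k \<and> m k + s * e k \<le> hi k)"

definition line_on_box_face :: "'k set \<Rightarrow> ('k \<Rightarrow> real) \<Rightarrow> ('k \<Rightarrow> real) \<Rightarrow> ('k \<Rightarrow> real) \<Rightarrow> ('k \<Rightarrow> real) \<Rightarrow> real \<Rightarrow> bool" where
  "line_on_box_face K lo hi m e s \<longleftrightarrow> (\<exists>k\<in>K. m k + s * e k \<in> {lo k, hi k})"

lemma line_in_box_exit_ge:
  assumes "finite K" "line_in_box K lo hi m e 1" "\<exists>k\<in>K. e k \<noteq> 0"
  shows "\<exists>s\<ge>1. line_in_box K lo hi m e s \<and> line_on_box_face K lo hi m e s"
proof -
  define ratio where "ratio k = (if e k > 0 then hi k - m k else lo k - m k) / e k" for k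
  define R where "R = ratio ` {k\<in>K. e k \<noteq> 0}"
  have R: "finite R" "R \<noteq> {}" using assms(1,3) unfolding R_def by auto
  define s where "s = Min R"
  obtain k0 where k0: "k0 \<in> K" "e k0 \<noteq> 0" "s = ratio k0"
    using Min_in[OF R] unfolding s_def R_def by auto
  have s_le: "s \<le> ratio k" if "k \<in> K" "e k \<noteq> 0" for k
    unfolding s_def using R that by (intro Min_le) (auto simp: R_def)
  have box1: "lo k \<le> m k + e k" "m k + e k \<le> hi k" if "k \<in> K" for k
    using assms(2) that by (auto simp: line_in_box_def)
  have "1 \<le> s"
    using box1[OF k0(1)] k0 by (auto simp: ratio_def le_divide_eq)
  have "lo k \<le> m k + s * e k \<and> m k + s * e k \<le> hi k" if k: "k \<in> K" for k
  proof (cases "e k" "0 :: real" rule: linorder_cases)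
    case less
    then have "lo k - m k \<le> s * e k" "s * e k \<le> e k"
      using s_le[OF k] \<open>1 \<le> s\<close> mult_right_mono_neg[of 1 s "e k"]
      by (auto simp: ratio_def le_divide_eq)
    then show ?thesis using box1[OF k] by linarith
  next
    case equal
    then show ?thesis using box1[OF k] by simp
  next
    case greater
    then have "s * e k \<le> hi k - m k" "e k \<le> s * e k"
      using s_le[OF k] \<open>1 \<le> s\<close> by (auto simp: ratio_def le_divide_eq)
    then show ?thesis using box1[OF k] by linarith
  qed
  moreover have "m k0 + s * e k0 \<in> {lo k0, hi k0}"
    using k0 by (auto simp: ratio_def field_simps split: if_splits)
  ultimately show ?thesis
    using \<open>1 \<le> s\<close> k0(1) by (auto simp: line_in_box_def line_on_box_face_def)
qed

lemma line_in_box_exit_le: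
  assumes "finite K" "line_in_box K lo hi m e 1" "\<exists>k\<in>K. e k \<noteq> 0"
  shows "\<exists>s\<le>1. line_in_box K lo hi m e s \<and> line_on_box_face K lo hi m e s"
proof -
  let ?m' = "\<lambda>k. m k + 2 * e k" and ?e' = "\<lambda>k. - e k"
  have reflect: "?m' k + s * ?e' k = m k + (2 - s) * e k" for k s
    by (simp add: algebra_simps)
  have "line_in_box K lo hi ?m' ?e' 1" "\<exists>k\<in>K. ?e' k \<noteq> 0"
    using assms(2,3) unfolding line_in_box_def reflect by auto
  then obtain s where "s \<ge> 1" "line_in_box K lo hi ?m' ?e' s" "line_on_box_face K lo hi ?m' ?e' s"
    using line_in_box_exit_ge[OF assms(1)] by blast
  then show ?thesis
    unfolding line_in_box_def line_on_box_face_def reflect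
    by (intro exI[of _ "2 - s"]) auto
qed

lemma line_in_box_between:
  assumes "line_in_box K lo hi m e x" "line_in_box K lo hi m e y" "x \<le> s" "s \<le> y"
  shows "line_in_box K lo hi m e s"
  unfolding line_in_box_def
proof
  fix k assume "k \<in> K"
  then have "lo k \<le> m k + x * e k" "m k + x * e k \<le> hi k" "lo k \<le> m k + y * e k" "m k + y * e k \<le> hi k"
    using assms(1,2) by (auto simp: line_in_box_def)
  moreover have "x * e k \<le> s * e k \<and> s * e k \<le> y * e k \<or> y * e k \<le> s * e k \<and> s * e k \<le> x * e k"
    using assms(3,4) mult_right_mono[of _ _ "e k"] mult_right_mono_neg[of _ _ "e k"]
    by (cases "e k \<ge> 0") auto
  ultimately show "lo k \<le> m k + s * e k \<and> m k + s * e k \<le> hi k" by linarith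
qed

lemma even_quadratic_max_in_box_reached_on_face:
  fixes F :: "real \<Rightarrow> real"
  assumes "finite K" and F: "\<And>s. F s = c0 + c2 * s\<^sup>2"
    and box: "line_in_box K lo hi m e 1" and moving: "\<exists>k\<in>K. e k \<noteq> 0"
    and interior: "\<not> line_on_box_face K lo hi m e 1"
    and max: "\<And>s. line_in_box K lo hi m e s \<Longrightarrow> F s \<le> F 1"
  shows "\<exists>s. line_in_box K lo hi m e s \<and> line_on_box_face K lo hi m e s \<and> F s = F 1"
proof -
  obtain s1 where s1: "s1 \<ge> 1" "line_in_box K lo hi m e s1" "line_on_box_face K lo hi m e s1"
    using line_in_box_exit_ge[OF assms(1) box moving] by blast
  obtain s0 where s0: "s0 \<le> 1" "line_in_box K lo hi m e s0" "line_on_box_face K lo hi m e s0"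
    using line_in_box_exit_le[OF assms(1) box moving] by blast
  have "s1 > 1" "s0 < 1"
    using s0 s1 interior by (metis order_less_le)+
  have "c2 \<le> 0"
  proof -
    have "c2 * (s1\<^sup>2 - 1) \<le> 0"
      using max[OF s1(2)] unfolding F by (simp add: algebra_simps)
    moreover have "1 < s1\<^sup>2" using \<open>s1 > 1\<close> by simp
    ultimately show ?thesis by (simp add: mult_le_0_iff)
  qed
  moreover have "c2 \<ge> 0"
  proof -
    define s' where "s' = max s0 0"
    have "line_in_box K lo hi m e s'"
      using line_in_box_between[OF s0(2) box] \<open>s0 < 1\<close> by (simp add: s'_def)
    moreover have "s'\<^sup>2 < 1"
      using \<open>s0 < 1\<close> by (simp add: s'_def abs_square_less_1)
    ultimately have "0 \<le> c2 * (1 - s'\<^sup>2)" "0 < 1 - s'\<^sup>2"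
      using max unfolding F by (force simp: algebra_simps)+
    then show ?thesis by (simp add: zero_le_mult_iff)
  qed
  ultimately show ?thesis using s1(2,3) F by auto
qed

lemma swap_path_in_domD:
  assumes D: "(p, q) \<in> domD b l a bu c d pbar qbar"
    and idx: "i \<in> {1..l}" "h \<in> {1..l}" "i \<noteq> h" "l \<le> b"
    and nonneg: "0 \<le> a i" "0 \<le> a h" "0 \<le> c i" "0 \<le> c h"
    and box: "\<forall>k\<in>{i, h}. a k \<le> swap_path i h p s k \<and> swap_path i h p s k \<le> bu k \<and>
                           c k \<le> swap_path i h q s k \<and> swap_path i h q s k \<le> d k"
  shows "(swap_path i h p s, swap_path i h q s) \<in> domD b l a bu c d pbar qbar"
proof -
  have prob: "prob_vec b (swap_path i h r s)"
    if "prob_vec b r" "\<forall>k\<in>{i, h}. 0 \<le> swap_path i h r s k" for r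
    unfolding prob_vec_def
  proof
    show "\<forall>k\<in>{1..b}. 0 \<le> swap_path i h r s k"
    proof
      fix k assume "k \<in> {1..b}"
      then show "0 \<le> swap_path i h r s k"
        using that idx(3) by (cases "k \<in> {i, h}") (auto simp: prob_vec_def swap_path_apply(3))
    qed
    show "(\<Sum>k=1..b. swap_path i h r s k) = 1"
      using that(1) idx sum_swap_path[of "{1..b}" i h r s] by (auto simp: prob_vec_def)
  qed
  have "0 \<le> swap_path i h p s k" "0 \<le> swap_path i h q s k" if "k \<in> {i, h}" for k
    using box nonneg that by force+
  moreover have "\<forall>k\<in>{1..l}. a k \<le> swap_path i h p s k \<and> swap_path i h p s k \<le> bu k \<and>
                           c k \<le> swap_path i h q s k \<and> swap_path i h q s k \<le> d k"
  proof
    fix k assume "k \<in> {1..l}"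
    then show "a k \<le> swap_path i h p s k \<and> swap_path i h p s k \<le> bu k \<and>
               c k \<le> swap_path i h q s k \<and> swap_path i h q s k \<le> d k"
      using box D idx(3) by (cases "k \<in> {i, h}") (auto simp: domD_def swap_path_apply(3))
  qed
  moreover have "\<forall>k\<in>{l<..b}. swap_path i h p s k = pbar k \<and> swap_path i h q s k = qbar k"
    using D idx by (auto simp: domD_def swap_path_apply(3))
  ultimately show ?thesis
    using D unfolding domD_def by (auto intro!: prob)
qed

lemma Psi_max_reached_on_face_along_swap_path:
  assumes "j \<le> b" "l \<le> b" and idx: "i \<in> {1..l}" "h \<in> {1..l}" "i \<noteq> h"
    and nonneg: "0 \<le> a i" "0 \<le> a h" "0 \<le> c i" "0 \<le> c h"
    and D: "(p, q) \<in> domD b l a bu c d pbar qbar"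
    and max: "\<forall>(p', q') \<in> domD b l a bu c d pbar qbar. Psi b j p' q' \<le> Psi b j p q"
    and distinct: "p i \<noteq> p h \<or> q i \<noteq> q h"
    and interior: "p i \<notin> {a i, bu i}" "q i \<notin> {c i, d i}" "p h \<notin> {a h, bu h}" "q h \<notin> {c h, d h}"
  shows "\<exists>p' q'. (p', q') \<in> domD b l a bu c d pbar qbar \<and> Psi b j p' q' = Psi b j p q \<and>
           (\<exists>k\<in>{i, h}. p' k \<in> {a k, bu k} \<or> q' k \<in> {c k, d k})"
proof -
  text \<open>The four box constraints on the moving coordinates, indexed by the coordinate and by
    whether they concern \<open>p\<close> (\<open>True\<close>) or \<open>q\<close> (\<open>False\<close>).\<close>
  let ?K = "{(i, True), (h, True), (i, False), (h, False)}"
  define lo where "lo \<kappa> = (if snd \<kappa> then a else c) (fst \<kappa>)" for \<kappa>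
  define hi where "hi \<kappa> = (if snd \<kappa> then bu else d) (fst \<kappa>)" for \<kappa>
  define v :: "nat \<times> bool \<Rightarrow> nat \<Rightarrow> real" where "v \<kappa> = (if snd \<kappa> then p else q)" for \<kappa>
  define m where "m \<kappa> = (v \<kappa> i + v \<kappa> h) / 2" for \<kappa>
  define e where "e \<kappa> = (if fst \<kappa> = i then 1 else -1) * ((v \<kappa> i - v \<kappa> h) / 2)" for \<kappa>
  have coord: "m (k, True) + s * e (k, True) = swap_path i h p s k"
    "m (k, False) + s * e (k, False) = swap_path i h q s k" if "k \<in> {i, h}" for k s
    using that idx(3) by (auto simp: m_def e_def v_def swap_path_apply field_simps)
  have in_box: "line_in_box ?K lo hi m e s \<longleftrightarrow>
      (\<forall>k\<in>{i, h}. a k \<le> swap_path i h p s k \<and> swap_path i h p s k \<le> bu k \<and>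
                   c k \<le> swap_path i h q s k \<and> swap_path i h q s k \<le> d k)" for s
    by (auto simp: line_in_box_def lo_def hi_def coord)
  have on_face: "line_on_box_face ?K lo hi m e s \<longleftrightarrow>
      (\<exists>k\<in>{i, h}. swap_path i h p s k \<in> {a k, bu k} \<or> swap_path i h q s k \<in> {c k, d k})" for s
    by (auto simp: line_on_box_face_def lo_def hi_def coord)
  have D1: "\<forall>k\<in>{1..l}. a k \<le> p k \<and> p k \<le> bu k \<and> c k \<le> q k \<and> q k \<le> d k"
    using D by (simp add: domD_def)
  obtain c0 c2 where quadratic: "\<And>s. Psi b j (swap_path i h p s) (swap_path i h q s) = c0 + c2 * s\<^sup>2"
    using Psi_swap_path_even_quadratic[of j b i h p q] assms(1,2) idx by auto
  have "\<exists>s. line_in_box ?K lo hi m e s \<and> line_on_box_face ?K lo hi m e s \<and>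
      Psi b j (swap_path i h p s) (swap_path i h q s) = Psi b j (swap_path i h p 1) (swap_path i h q 1)"
  proof (rule even_quadratic_max_in_box_reached_on_face[OF _ quadratic])
    show "finite ?K" by simp
    show "line_in_box ?K lo hi m e 1" "\<not> line_on_box_face ?K lo hi m e 1"
      unfolding in_box on_face using D1 idx interior by auto
    show "\<exists>\<kappa>\<in>?K. e \<kappa> \<noteq> 0"
      using distinct by (auto simp: e_def v_def)
    show "Psi b j (swap_path i h p s) (swap_path i h q s) \<le> Psi b j (swap_path i h p 1) (swap_path i h q 1)"
      if "line_in_box ?K lo hi m e s" for s
      using max swap_path_in_domD[OF D idx assms(2) nonneg] that unfolding in_box by auto
  qed
  then show ?thesis
    unfolding in_box on_face swap_path_one using swap_path_in_domD[OF D idx assms(2) nonneg] by blast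
qed

theorem mainTheorem5:
  fixes b j l :: nat and a bu c d pbar qbar :: "nat \<Rightarrow> real"
  assumes "b \<ge> 3" and "1 \<le> j" and "j \<le> b - 1" and "2 \<le> l" and "l \<le> b"
    and "\<forall>i\<in>{1..l}. 0 \<le> a i \<and> a i \<le> bu i \<and> bu i \<le> 1"
    and "\<forall>i\<in>{1..l}. 0 \<le> c i \<and> c i \<le> d i \<and> d i \<le> 1"
    and "(pbar, qbar) \<in> domD b l a bu c d pbar qbar"
    and "\<forall>(p, q) \<in> domD b l a bu c d pbar qbar. Psi b j p q \<le> Psi b j pbar qbar"
  shows "(\<forall>i\<in>{1..l}. \<forall>h\<in>{1..l}. pbar i = pbar h \<and> qbar i = qbar h) \<or>
         (\<exists>p' q'. (p', q') \<in> domD b l a bu c d pbar qbar \<and> Psi b j p' q' = Psi b j pbar qbar \<and>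
            (\<exists>i\<in>{1..l}. p' i \<in> {a i, bu i} \<or> q' i \<in> {c i, d i}))"
proof (cases "\<forall>i\<in>{1..l}. \<forall>h\<in>{1..l}. pbar i = pbar h \<and> qbar i = qbar h")
  case False
  then obtain i h where idx: "i \<in> {1..l}" "h \<in> {1..l}"
    and distinct: "pbar i \<noteq> pbar h \<or> qbar i \<noteq> qbar h"
    by blast
  then have "i \<noteq> h" by auto
  have "\<exists>p' q'. (p', q') \<in> domD b l a bu c d pbar qbar \<and> Psi b j p' q' = Psi b j pbar qbar \<and>
          (\<exists>k\<in>{i, h}. p' k \<in> {a k, bu k} \<or> q' k \<in> {c k, d k})"
  proof (cases "\<exists>k\<in>{i, h}. pbar k \<in> {a k, bu k} \<or> qbar k \<in> {c k, d k}")
    case True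
    with assms(8) show ?thesis by (intro exI[of _ pbar] exI[of _ qbar]) simp
  next
    case False
    then have interior: "pbar i \<notin> {a i, bu i}" "qbar i \<notin> {c i, d i}"
        "pbar h \<notin> {a h, bu h}" "qbar h \<notin> {c h, d h}"
      by simp_all
    have "j \<le> b" "0 \<le> a i" "0 \<le> a h" "0 \<le> c i" "0 \<le> c h"
      using assms(3,6,7) idx by auto
    then show ?thesis
      using Psi_max_reached_on_face_along_swap_path[OF _ assms(5) idx \<open>i \<noteq> h\<close> _ _ _ _
          assms(8,9) distinct interior] by blast
  qed
  then obtain p' q' k where "(p', q') \<in> domD b l a bu c d pbar qbar" "Psi b j p' q' = Psi b j pbar qbar"
    and "k \<in> {i, h}" "p' k \<in> {a k, bu k} \<or> q' k \<in> {c k, d k}"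
    by blast
  moreover from \<open>k \<in> {i, h}\<close> idx have "k \<in> {1..l}" by blast
  ultimately show ?thesis by (intro disjI2) blast
next
  case True
  then show ?thesis by (rule disjI1)
qed

end
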